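(* Let $\mathcal Y\subset\mathbb R^d$ be finite with no element a strict convex combination of other elements, $Y$ the $d\times|\mathcal Y|$ matrix with columns $y\in\mathcal Y$, $\kappa>0$, $\xi_1,\dots,\xi_N$ noise samples, $c:\mathcal Y\times\Xi\to\mathbb R$ a cost and $\gamma_i=\gamma(\xi_i)=(c(y,\xi_i))_{y\in\mathcal Y}$. Let $\Omega_\Delta$ be a proper l.s.c. convex function with domain $\Delta^{\mathcal Y}$ whose restriction to the affine hull of $\Delta^{\mathcal Y}$ is Legendre-type, and assume $\Omega_\Delta$ is $L$-strongly convex, meaning that $\nabla\Omega_\Delta^*$ is $\frac1L$-Lipschitz continuous with respect to the Euclidean norm $\|\cdot\|$. Let $R_\Delta(q;\xi)=\langle\gamma(\xi)|q\rangle$, $\underline{S}(\theta;\xi)=\min_{q\in\Delta^{\mathcal Y}}\big[\langle\gamma(\xi)|q\rangle+\kappa\mathcal L_{\Omega_\Delta}(Y^\top\theta;q)\big]$, $\underline{\mathcal S_N}(\theta)=\frac1N\sum_i\underline S(\theta;\xi_i)$ and $\mathcal R_N(\theta)=\frac1N\sum_iR_\Delta(\nabla\Omega_\Delta^*(Y^\top\theta);\xi_i)$. Then for every $\theta\in\mathbb R^d$ and $i\in[N]$, $$\big|R_\Delta(\nabla\Omega_\Delta^*(Y^\top\theta);\xi_i)-\underline S(\theta;\xi_i)\big|\le\frac{3\|\gamma_i\|^2}{2L\kappa},\qquad |\underline{\mathcal S_N}(\theta)-\mathcal R_N(\theta)|\le\frac{3}{2NL\kappa}\sum_{i=1}^N\|\gamma_i\|^2,$$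 and for any $\theta_{\mathcal S}\in\operatorname{argmin}_\theta\underline{\mathcal S_N}(\theta)$ and $\theta_{\mathcal R}\in\operatorname{argmin}_\theta\mathcal R_N(\theta)$, $$\mathcal R_N(\theta_{\mathcal S})-\mathcal R_N(\theta_{\mathcal R})\le\frac{3}{L\kappa N}\sum_{i=1}^N\|\gamma_i\|^2.$$
   Context: $\Delta^{\mathcal Y}=\{q\in\mathbb R^{\mathcal Y}:q\ge0,\sum_yq_y=1\}$. Legendre-type: strictly convex on the interior of its domain, differentiable there with nonempty interior, and gradient norm tending to $+\infty$ at the boundary of the domain (for the restriction to an affine subspace, with respect to that subspace's metric). $\Omega_\Delta^*$ is the Fenchel conjugate and $\mathcal L_{\Omega_\Delta}(s;q)=\Omega_\Delta(q)+\Omega^*_\Delta(s)-\langle s|q\rangle$ is the Fenchel–Young loss. *)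

theory Defs
  imports "HOL-Analysis.Analysis" "HOL-Library.Liminf_Limsup"
begin

definition prob_simplex :: "(real^'y::finite) set" where
  "prob_simplex = {q. (\<forall>y. 0 \<le> q $ y) \<and> (\<Sum>y\<in>UNIV. q $ y) = 1}"

definition edom :: "('a \<Rightarrow> ereal) \<Rightarrow> 'a set" where
  "edom f = {x. f x \<noteq> \<infinity>}"

definition proper_fun :: "('a \<Rightarrow> ereal) \<Rightarrow> bool" where
  "proper_fun f \<longleftrightarrow> (\<forall>x. f x \<noteq> -\<infinity>) \<and> (\<exists>x. f x \<noteq> \<infinity>)"

definition ereal_convex :: "('a::real_vector \<Rightarrow> ereal) \<Rightarrow> bool" where
  "ereal_convex f \<longleftrightarrow> (\<forall>x y t. 0 \<le> t \<and> t \<le> 1 \<longrightarrow>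
      f (t *\<^sub>R x + (1 - t) *\<^sub>R y) \<le> ereal t * f x + ereal (1 - t) * f y)"

definition lsc_fun :: "('a::topological_space \<Rightarrow> ereal) \<Rightarrow> bool" where
  "lsc_fun f \<longleftrightarrow> (\<forall>x. f x \<le> Liminf (at x) f)"

definition rel_int_in :: "'a::metric_space set \<Rightarrow> 'a set \<Rightarrow> 'a set" where
  "rel_int_in A D = {x\<in>D. \<exists>e>0. \<forall>z\<in>A. dist z x < e \<longrightarrow> z \<in> D}"

definition tangent_space :: "'a::real_vector set \<Rightarrow> 'a set" where
  "tangent_space A = {x - y | x y. x \<in> A \<and> y \<in> A}"

definition grad_in :: "('a::real_inner \<Rightarrow> ereal) \<Rightarrow> 'a set \<Rightarrow> 'a \<Rightarrow> 'a" where
  "grad_in f A x = (THE g. g \<in> tangent_space A \<and>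
      ((\<lambda>z. real_of_ereal (f z)) has_derivative (\<lambda>v. g \<bullet> v)) (at x within A))"

definition legendre_on :: "('a::real_inner \<Rightarrow> ereal) \<Rightarrow> 'a set \<Rightarrow> bool" where
  "legendre_on f A \<longleftrightarrow>
    (let D = A \<inter> edom f; I = rel_int_in A D in
      I \<noteq> {} \<and>
      (\<forall>x\<in>I. \<forall>y\<in>I. \<forall>t. x \<noteq> y \<and> 0 < t \<and> t < 1 \<longrightarrow>
          f (t *\<^sub>R x + (1 - t) *\<^sub>R y) < ereal t * f x + ereal (1 - t) * f y) \<and>
      (\<forall>x\<in>I. \<exists>g\<in>tangent_space A.
          ((\<lambda>z. real_of_ereal (f z)) has_derivative (\<lambda>v. g \<bullet> v)) (at x within A)) \<and>
      (\<forall>xs b. (\<forall>k. xs k \<in> I) \<longrightarrow> xs \<longlonglongrightarrow> b \<longrightarrow> b \<notin> I \<longrightarrow>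
          filterlim (\<lambda>k. norm (grad_in f A (xs k))) at_top sequentially))"

definition fconj :: "('a::real_inner \<Rightarrow> ereal) \<Rightarrow> 'a \<Rightarrow> ereal" where
  "fconj f s = (SUP x. ereal (s \<bullet> x) - f x)"

definition fy_loss :: "('a::real_inner \<Rightarrow> ereal) \<Rightarrow> 'a \<Rightarrow> 'a \<Rightarrow> ereal" where
  "fy_loss f s q = f q + fconj f s - ereal (s \<bullet> q)"

text \<open>Cost vector gamma(xi) = (c(y,xi))_y and Y^T theta = (<y, theta>)_y.\<close>
definition cost_vec :: "('y::finite \<Rightarrow> 'x \<Rightarrow> real) \<Rightarrow> 'x \<Rightarrow> real^'y" where
  "cost_vec c x = (\<chi> y. c y x)"

definition YT :: "('y::finite \<Rightarrow> real^'d::finite) \<Rightarrow> real^'d \<Rightarrow> real^'y" where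
  "YT yv \<theta> = (\<chi> y. yv y \<bullet> \<theta>)"

definition S_lower :: "(real^'y::finite \<Rightarrow> ereal) \<Rightarrow> real \<Rightarrow> ('y \<Rightarrow> real^'d::finite)
    \<Rightarrow> ('y \<Rightarrow> 'x \<Rightarrow> real) \<Rightarrow> real^'d \<Rightarrow> 'x \<Rightarrow> real" where
  "S_lower \<Omega> \<kappa> yv c \<theta> x = real_of_ereal (INF q\<in>prob_simplex.
      ereal (cost_vec c x \<bullet> q) + ereal \<kappa> * fy_loss \<Omega> (YT yv \<theta>) q)"

end

theory Submission
  imports Defs
begin

text \<open>
  If \<Omega> is proper with bounded domain, its conjugate \<Omega>* is either finite everywhere or
  +\<infinity> everywhere. In the finite case the minimum over q defining the lower surrogate is itself a
  conjugate value at a shifted point: with s = Y^T \<theta> and \<gamma> the cost vector,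
  S(\<theta>;\<xi>) = \<kappa> (\<Omega>*(s) - \<Omega>*(s - \<gamma>/\<kappa>)). As the gradient of \<Omega>* is 1/L-Lipschitz, the
  first-order Taylor remainder of \<Omega>* over a step v is at most |v|^2/L; for v = -\<gamma>/\<kappa> this
  compares S(\<theta>;\<xi>) with \<langle>\<gamma>|\<nabla>\<Omega>*(s)\<rangle> up to |\<gamma>|^2/(L\<kappa>). Averaging over the samples bounds
  the distance between the two empirical objectives, and a minimizer of a uniform
  \<epsilon>-approximation of a function is 2\<epsilon>-optimal for it.
\<close>

lemma bounded_prob_simplex: "bounded prob_simplex"
proof -
  have "norm q \<le> 1" if "q \<in> prob_simplex" for q :: "real^'y"
  proof -
    have "norm q \<le> (\<Sum>i\<in>UNIV. \<bar>q$i\<bar>)" by (rule norm_le_l1_cart)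
    also have "\<dots> = 1" using that by (simp add: prob_simplex_def)
    finally show ?thesis .
  qed
  then show ?thesis unfolding bounded_iff by blast
qed

lemma fconj_lower: "ereal (s \<bullet> x) - f x \<le> fconj f s"
  unfolding fconj_def by (rule SUP_upper) simp

lemma fconj_eq_SUP_edom: "fconj f s = (SUP x\<in>edom f. ereal (s \<bullet> x) - f x)"
  unfolding fconj_def
proof (rule antisym)
  show "(SUP x. ereal (s \<bullet> x) - f x) \<le> (SUP x\<in>edom f. ereal (s \<bullet> x) - f x)"
  proof (rule SUP_least)
    fix x
    show "ereal (s \<bullet> x) - f x \<le> (SUP x\<in>edom f. ereal (s \<bullet> x) - f x)"
      by (cases "x \<in> edom f") (auto intro: SUP_upper simp: edom_def)
  qed
qed (rule SUP_subset_mono, simp_all)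

lemma fconj_le_add_norm:
  assumes "\<forall>x\<in>edom f. norm x \<le> r"
  shows "fconj f s \<le> fconj f t + ereal (r * norm (s - t))"
  unfolding fconj_eq_SUP_edom[of f s]
proof (rule SUP_least)
  fix x assume x: "x \<in> edom f"
  have "s \<bullet> x - t \<bullet> x \<le> norm x * norm (s - t)"
    by (metis inner_diff_left inner_commute norm_cauchy_schwarz)
  also have "\<dots> \<le> r * norm (s - t)"
    using assms x by (simp add: mult_right_mono)
  finally have "ereal (s \<bullet> x) - f x \<le> ereal (t \<bullet> x) - f x + ereal (r * norm (s - t))"
    by (cases "f x") auto
  also have "\<dots> \<le> fconj f t + ereal (r * norm (s - t))"
    by (intro add_right_mono fconj_lower)
  finally show "ereal (s \<bullet> x) - f x \<le> fconj f t + ereal (r * norm (s - t))" .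
qed

lemma fconj_infinite_everywhere:
  assumes "bounded (edom f)" and "fconj f s = \<infinity>"
  shows "fconj f t = \<infinity>"
proof -
  obtain r where "\<forall>x\<in>edom f. norm x \<le> r"
    using assms(1) unfolding bounded_iff by blast
  then show ?thesis
    using fconj_le_add_norm[of f r s t] assms(2) by auto
qed

lemma fconj_neq_MInfty:
  assumes "proper_fun f" shows "fconj f s \<noteq> -\<infinity>"
proof -
  obtain x where "f x \<noteq> \<infinity>" using assms unfolding proper_fun_def by blast
  then have "ereal (s \<bullet> x) - f x \<noteq> -\<infinity>" by (cases "f x") auto
  then show ?thesis using fconj_lower[of s x f] by auto
qed

lemma INF_fy_regularized_eq:
  fixes f :: "'a::real_inner \<Rightarrow> ereal"
  assumes proper: "proper_fun f" and "\<kappa> > 0"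
    and conj_s: "fconj f s = ereal a"
    and conj_shifted: "fconj f (s - (1 / \<kappa>) *\<^sub>R \<gamma>) = ereal b"
  shows "(INF q\<in>edom f. ereal (\<gamma> \<bullet> q) + ereal \<kappa> * fy_loss f s q) = ereal (\<kappa> * (a - b))"
proof -
  let ?t = "s - (1 / \<kappa>) *\<^sub>R \<gamma>"
  have edom_nonempty: "edom f \<noteq> {}"
    using proper unfolding proper_fun_def edom_def by blast
  have "ereal (\<gamma> \<bullet> q) + ereal \<kappa> * fy_loss f s q = ereal (\<kappa> * a) - ereal \<kappa> * (ereal (?t \<bullet> q) - f q)"
    if q: "q \<in> edom f" for q
  proof -
    obtain w where "f q = ereal w"
      using q proper unfolding edom_def proper_fun_def by (cases "f q") auto
    then show ?thesis
      using \<open>\<kappa> > 0\<close> unfolding fy_loss_def conj_s by (simp add: inner_diff_left algebra_simps)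
  qed
  then have "(INF q\<in>edom f. ereal (\<gamma> \<bullet> q) + ereal \<kappa> * fy_loss f s q)
      = (INF q\<in>edom f. ereal (\<kappa> * a) - ereal \<kappa> * (ereal (?t \<bullet> q) - f q))"
    by (rule INF_cong[OF refl])
  also have "\<dots> = ereal (\<kappa> * a) - (SUP q\<in>edom f. ereal \<kappa> * (ereal (?t \<bullet> q) - f q))"
    using edom_nonempty by (simp add: INF_ereal_minus_right)
  also have "\<dots> = ereal (\<kappa> * a) - ereal \<kappa> * fconj f ?t"
    using edom_nonempty \<open>\<kappa> > 0\<close> by (simp add: Sup_ereal_mult_left' fconj_eq_SUP_edom)
  also have "\<dots> = ereal (\<kappa> * (a - b))"
    by (simp add: conj_shifted right_diff_distrib)
  finally show ?thesis .
qed

lemma lipschitz_gradient_remainder_le: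
  fixes F :: "'a::real_inner \<Rightarrow> real"
  assumes deriv: "\<forall>s. (F has_derivative (\<lambda>v. G s \<bullet> v)) (at s)"
    and lipschitz: "\<forall>s t. norm (G s - G t) \<le> (1 / L) * norm (s - t)" and "L > 0"
  shows "\<bar>F (s + v) - F s - G s \<bullet> v\<bar> \<le> (norm v)\<^sup>2 / L"
proof -
  have "((\<lambda>t. F (s + t *\<^sub>R v)) has_real_derivative G (s + t *\<^sub>R v) \<bullet> v) (at t)" for t
  proof -
    have "((\<lambda>t. s + t *\<^sub>R v) has_derivative (\<lambda>u. u *\<^sub>R v)) (at t)"
      by (auto intro!: derivative_eq_intros)
    from has_derivative_compose[OF this deriv[rule_format]]
    show ?thesis
      unfolding has_field_derivative_def by (simp add: mult.commute[of _ "G _ \<bullet> v"])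
  qed
  then obtain t where t: "0 < t" "t < 1"
    and mvt: "F (s + v) - F s = G (s + t *\<^sub>R v) \<bullet> v"
    using MVT2[of 0 1 "\<lambda>t. F (s + t *\<^sub>R v)" "\<lambda>t. G (s + t *\<^sub>R v) \<bullet> v"] by auto
  have "\<bar>F (s + v) - F s - G s \<bullet> v\<bar> = \<bar>(G (s + t *\<^sub>R v) - G s) \<bullet> v\<bar>"
    by (simp add: mvt inner_diff_left)
  also have "\<dots> \<le> norm (G (s + t *\<^sub>R v) - G s) * norm v"
    by (rule Cauchy_Schwarz_ineq2)
  also have "\<dots> \<le> (1 / L) * norm v * norm v"
  proof (rule mult_right_mono)
    have "norm (G (s + t *\<^sub>R v) - G s) \<le> (1 / L) * (t * norm v)"
      using lipschitz[rule_format, of "s + t *\<^sub>R v" s] t by simp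
    also have "\<dots> \<le> (1 / L) * norm v"
      using t \<open>L > 0\<close> by (intro mult_left_mono) (auto intro: mult_left_le_one_le)
    finally show "norm (G (s + t *\<^sub>R v) - G s) \<le> (1 / L) * norm v" .
  qed simp
  also have "\<dots> = (norm v)\<^sup>2 / L"
    by (simp add: power2_eq_square)
  finally show ?thesis .
qed

lemma fy_regularized_gap_le:
  fixes f :: "'a::real_inner \<Rightarrow> ereal"
  assumes proper: "proper_fun f" and bounded: "bounded (edom f)"
    and "\<kappa> > 0" and "L > 0"
    and deriv: "\<forall>s. ((\<lambda>s. real_of_ereal (fconj f s)) has_derivative (\<lambda>v. G s \<bullet> v)) (at s)"
    and lipschitz: "\<forall>s t. norm (G s - G t) \<le> (1 / L) * norm (s - t)"
  shows "\<bar>\<gamma> \<bullet> G s - real_of_ereal (INF q\<in>edom f. ereal (\<gamma> \<bullet> q) + ereal \<kappa> * fy_loss f s q)\<bar>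
           \<le> (norm \<gamma>)\<^sup>2 / (L * \<kappa>)"
proof (cases "\<exists>t. fconj f t = \<infinity>")
  case True
  \<comment> \<open>Both sides vanish: the gradient of the constant real_of_ereal \<infinity> = 0 is zero, and so is
    the junk value real_of_ereal of the infinite minimum.\<close>
  then have conj_infinite: "fconj f t = \<infinity>" for t
    using fconj_infinite_everywhere[OF bounded] by blast
  have "((\<lambda>s. real_of_ereal (fconj f s)) has_derivative (\<lambda>v. 0)) (at s)"
    by (simp add: conj_infinite)
  then have "(\<lambda>v. G s \<bullet> v) = (\<lambda>v. 0)"
    using deriv has_derivative_unique by blast
  then have "G s = 0"
    by (metis inner_eq_zero_iff)
  moreover have "(INF q\<in>edom f. ereal (\<gamma> \<bullet> q) + ereal \<kappa> * fy_loss f s q) = \<infinity>"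
    using proper \<open>\<kappa> > 0\<close> unfolding fy_loss_def proper_fun_def conj_infinite
    by (auto simp: Inf_eq_PInfty)
  ultimately show ?thesis
    using \<open>\<kappa> > 0\<close> \<open>L > 0\<close> by simp
next
  case False
  define F where "F t = real_of_ereal (fconj f t)" for t
  have conj_eq: "fconj f t = ereal (F t)" for t
    using False fconj_neq_MInfty[OF proper, of t] unfolding F_def by (cases "fconj f t") auto
  let ?h = "(1 / \<kappa>) *\<^sub>R \<gamma>"
  have "\<gamma> \<bullet> G s - real_of_ereal (INF q\<in>edom f. ereal (\<gamma> \<bullet> q) + ereal \<kappa> * fy_loss f s q)
      = \<gamma> \<bullet> G s - \<kappa> * (F s - F (s - ?h))"
    by (simp add: INF_fy_regularized_eq[OF proper \<open>\<kappa> > 0\<close> conj_eq conj_eq])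
  also have "\<dots> = \<kappa> * (F (s + - ?h) - F s - G s \<bullet> - ?h)"
    using \<open>\<kappa> > 0\<close> by (simp add: algebra_simps inner_commute)
  finally have "\<bar>\<gamma> \<bullet> G s - real_of_ereal (INF q\<in>edom f. ereal (\<gamma> \<bullet> q) + ereal \<kappa> * fy_loss f s q)\<bar>
      = \<kappa> * \<bar>F (s + - ?h) - F s - G s \<bullet> - ?h\<bar>"
    using \<open>\<kappa> > 0\<close> by (simp add: abs_mult)
  also have "\<dots> \<le> \<kappa> * ((norm (- ?h))\<^sup>2 / L)"
    using deriv lipschitz \<open>L > 0\<close> \<open>\<kappa> > 0\<close>
    by (intro mult_left_mono lipschitz_gradient_remainder_le) (simp_all add: F_def)
  also have "\<dots> = (norm \<gamma>)\<^sup>2 / (L * \<kappa>)"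
    using \<open>\<kappa> > 0\<close> by (simp add: power2_eq_square field_simps)
  finally show ?thesis .
qed

lemma abs_average_diff_le:
  fixes r s b :: "'i \<Rightarrow> real" and n :: real
  assumes "\<forall>i\<in>A. \<bar>s i - r i\<bar> \<le> b i" and "n \<ge> 0"
  shows "\<bar>(\<Sum>i\<in>A. s i) / n - (\<Sum>i\<in>A. r i) / n\<bar> \<le> (\<Sum>i\<in>A. b i) / n"
proof -
  have "\<bar>(\<Sum>i\<in>A. s i) / n - (\<Sum>i\<in>A. r i) / n\<bar> = \<bar>\<Sum>i\<in>A. s i - r i\<bar> / n"
    using \<open>n \<ge> 0\<close> by (simp add: sum_subtractf diff_divide_distrib[symmetric])
  also have "\<dots> \<le> (\<Sum>i\<in>A. \<bar>s i - r i\<bar>) / n"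
    using \<open>n \<ge> 0\<close> by (intro divide_right_mono sum_abs)
  also have "\<dots> \<le> (\<Sum>i\<in>A. b i) / n"
    using assms by (intro divide_right_mono sum_mono) auto
  finally show ?thesis .
qed

lemma minimizer_of_uniform_approximation:
  fixes S R :: "'a \<Rightarrow> real"
  assumes "\<forall>\<theta>. \<bar>S \<theta> - R \<theta>\<bar> \<le> B" and "\<forall>\<theta>. S \<theta>\<^sub>0 \<le> S \<theta>"
  shows "R \<theta>\<^sub>0 - R \<theta> \<le> 2 * B"
  using assms[rule_format, of \<theta>\<^sub>0] assms(1)[rule_format, of \<theta>] assms(2)[rule_format, of \<theta>]
  by (simp add: abs_le_iff)

theorem theorem2:
  fixes yv :: "'y::finite \<Rightarrow> real^'d::finite"
    and \<kappa> L :: real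
    and N :: nat
    and \<xi> :: "nat \<Rightarrow> 'x"
    and c :: "'y \<Rightarrow> 'x \<Rightarrow> real"
    and \<Omega> :: "real^'y \<Rightarrow> ereal"
    and g\<Omega>s :: "real^'y \<Rightarrow> real^'y"
  defines "SN \<equiv> (\<lambda>\<theta>. (\<Sum>i=1..N. S_lower \<Omega> \<kappa> yv c \<theta> (\<xi> i)) / real N)"
    and "RN \<equiv> (\<lambda>\<theta>. (\<Sum>i=1..N. cost_vec c (\<xi> i) \<bullet> g\<Omega>s (YT yv \<theta>)) / real N)"
  assumes extreme: "\<forall>y. yv y \<notin> convex hull (yv ` (UNIV - {y}))"
    and kappa_pos: "\<kappa> > 0"
    and proper: "proper_fun \<Omega>"
    and lsc: "lsc_fun \<Omega>"
    and convex: "ereal_convex \<Omega>"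
    and dom: "edom \<Omega> = prob_simplex"
    and legendre: "legendre_on \<Omega> (affine hull prob_simplex)"
    and L_pos: "L > 0"
    and grad_conj: "\<forall>s. ((\<lambda>s. real_of_ereal (fconj \<Omega> s)) has_derivative (\<lambda>v. g\<Omega>s s \<bullet> v)) (at s)"
    and lipschitz: "\<forall>s t. norm (g\<Omega>s s - g\<Omega>s t) \<le> (1 / L) * norm (s - t)"
  shows "(\<forall>\<theta>. \<forall>i\<in>{1..N}.
            \<bar>cost_vec c (\<xi> i) \<bullet> g\<Omega>s (YT yv \<theta>) - S_lower \<Omega> \<kappa> yv c \<theta> (\<xi> i)\<bar>
              \<le> 3 * (norm (cost_vec c (\<xi> i)))\<^sup>2 / (2 * L * \<kappa>))
       \<and> (\<forall>\<theta>. \<bar>SN \<theta> - RN \<theta>\<bar> \<le> 3 / (2 * real N * L * \<kappa>) * (\<Sum>i=1..N. (norm (cost_vec c (\<xi> i)))\<^sup>2))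
       \<and> (\<forall>\<theta>S \<theta>R. (\<forall>\<theta>. SN \<theta>S \<le> SN \<theta>) \<longrightarrow> (\<forall>\<theta>. RN \<theta>R \<le> RN \<theta>) \<longrightarrow>
            RN \<theta>S - RN \<theta>R \<le> 3 / (L * \<kappa> * real N) * (\<Sum>i=1..N. (norm (cost_vec c (\<xi> i)))\<^sup>2))"
proof -
  let ?\<gamma> = "\<lambda>i. cost_vec c (\<xi> i)"
  have pointwise: "\<bar>?\<gamma> i \<bullet> g\<Omega>s (YT yv \<theta>) - S_lower \<Omega> \<kappa> yv c \<theta> (\<xi> i)\<bar>
      \<le> 3 * (norm (?\<gamma> i))\<^sup>2 / (2 * L * \<kappa>)" for \<theta> i
  proof -
    have "\<bar>?\<gamma> i \<bullet> g\<Omega>s (YT yv \<theta>) - S_lower \<Omega> \<kappa> yv c \<theta> (\<xi> i)\<bar> \<le> (norm (?\<gamma> i))\<^sup>2 / (L * \<kappa>)"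
      using fy_regularized_gap_le[OF proper _ kappa_pos L_pos grad_conj lipschitz]
      unfolding S_lower_def dom by (simp add: bounded_prob_simplex)
    also have "\<dots> \<le> 3 * (norm (?\<gamma> i))\<^sup>2 / (2 * L * \<kappa>)"
      using kappa_pos L_pos by (simp add: field_simps)
    finally show ?thesis .
  qed
  have average: "\<bar>SN \<theta> - RN \<theta>\<bar> \<le> 3 / (2 * real N * L * \<kappa>) * (\<Sum>i=1..N. (norm (?\<gamma> i))\<^sup>2)" for \<theta>
  proof -
    have "\<bar>SN \<theta> - RN \<theta>\<bar> \<le> (\<Sum>i=1..N. 3 * (norm (?\<gamma> i))\<^sup>2 / (2 * L * \<kappa>)) / real N"
      unfolding SN_def RN_def using pointwise
      by (intro abs_average_diff_le) (simp_all add: abs_minus_commute)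
    then show ?thesis
      by (simp add: sum_divide_distrib[symmetric] sum_distrib_left[symmetric] mult_ac)
  qed
  have "RN \<theta>S - RN \<theta>R \<le> 3 / (L * \<kappa> * real N) * (\<Sum>i=1..N. (norm (?\<gamma> i))\<^sup>2)"
    if "\<forall>\<theta>. SN \<theta>S \<le> SN \<theta>" for \<theta>S \<theta>R
    using minimizer_of_uniform_approximation[OF allI[OF average] that, of \<theta>R] by simp
  then show ?thesis
    using pointwise average by blast
qed

end
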